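(* Consider a complete 4-node network with nodes $A,B,C,D$, where for each ordered pair of distinct nodes $(X,Y)$ the directed link $XY$ has capacity $XY>0$. Define \[ I^*=\min\{BA+CA,BA+DA,CA+DA,AB+CB,AB+DB,CB+DB,AC+BC,AC+DC,BC+DC,AD+BD,AD+CD,BD+CD\}, \] i.e., the minimum, over all nodes, of the sum of the capacities of any two distinct incoming links to that node. For an unordered pair $\{X,Y\}$ write $\widehat{XY}=XY+YX$. Then for any positive value $R<I^*$, at least three of $\widehat{AB},\widehat{AC},\widehat{AD},\widehat{BC},\widehat{BD},\widehat{CD}$ are strictly greater than $R$.
   Context: Here $XY$ denotes the capacity (maximum number of bits per unit time) of the directed link from node $X$ to node $Y$. *)

theory Defs
  imports Complex_Main
begin

datatype node = A | B | C | D

lemma UNIV_node: "(UNIV :: node set) = {A, B, C, D}"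
  using node.exhaust by auto

instance node :: finite
  by standard (simp add: UNIV_node)

definition Istar :: "(node \<Rightarrow> node \<Rightarrow> real) \<Rightarrow> real" where
  "Istar c = Min {c X Z + c Y Z | X Y Z. X \<noteq> Y \<and> X \<noteq> Z \<and> Y \<noteq> Z}"

definition bicap :: "(node \<Rightarrow> node \<Rightarrow> real) \<Rightarrow> node \<Rightarrow> node \<Rightarrow> real" where
  "bicap c X Y = c X Y + c Y X"

end

theory Submission
  imports Defs
begin

text \<open>Call a pair weak if its bidirectional capacity is at most R. Around a cycle of pairs, the
  bidirectional capacities add up to the sum, over the vertices of the cycle, of the two links
  entering each vertex from its cycle neighbours; each such sum exceeds R. Hence the weak pairs
  contain no cycle, so they form a forest on four nodes and number at most three out of six.\<close>

lemma Istar_le: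
  assumes "X \<noteq> Y" "X \<noteq> Z" "Y \<noteq> Z"
  shows "Istar c \<le> c X Z + c Y Z"
proof -
  let ?M = "{c X Z + c Y Z | X Y Z. X \<noteq> Y \<and> X \<noteq> Z \<and> Y \<noteq> Z}"
  have "?M \<subseteq> (\<lambda>(X, Y, Z). c X Z + c Y Z) ` UNIV"
    by (auto intro!: image_eqI[where x = "(X, Y, Z)" for X Y Z])
  then have "finite ?M"
    by (rule finite_subset) simp
  moreover have "c X Z + c Y Z \<in> ?M"
    using assms by blast
  ultimately show ?thesis
    unfolding Istar_def by (rule Min_le)
qed

lemma bicap_commute: "bicap c X Y = bicap c Y X"
  by (simp add: bicap_def)

context
  fixes c :: "node \<Rightarrow> node \<Rightarrow> real" and R :: real
  assumes in_pairs_gt: "\<And>X Y Z. X \<noteq> Y \<Longrightarrow> X \<noteq> Z \<Longrightarrow> Y \<noteq> Z \<Longrightarrow> R < c X Z + c Y Z"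
begin

lemma no_weak_triangle:
  assumes "distinct [X, Y, Z]"
  shows "R < bicap c X Y \<or> R < bicap c Y Z \<or> R < bicap c Z X"
  using assms in_pairs_gt[of Y Z X] in_pairs_gt[of X Z Y] in_pairs_gt[of X Y Z]
  unfolding bicap_def by auto

lemma no_weak_square:
  assumes "distinct [X, Y, Z, W]"
  shows "R < bicap c X Y \<or> R < bicap c Y Z \<or> R < bicap c Z W \<or> R < bicap c W X"
  using assms in_pairs_gt[of W Y X] in_pairs_gt[of X Z Y]
    in_pairs_gt[of Y W Z] in_pairs_gt[of Z X W]
  unfolding bicap_def by auto

end

lemma card_pairs_ge_3_if_complement_acyclic:
  fixes P :: "node \<Rightarrow> node \<Rightarrow> bool"
  assumes sym: "\<And>X Y. P X Y \<Longrightarrow> P Y X"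
    and triangle: "\<And>X Y Z. distinct [X, Y, Z] \<Longrightarrow> P X Y \<or> P Y Z \<or> P Z X"
    and square: "\<And>X Y Z W. distinct [X, Y, Z, W] \<Longrightarrow> P X Y \<or> P Y Z \<or> P Z W \<or> P W X"
  shows "card {{X, Y} | X Y. X \<noteq> Y \<and> P X Y} \<ge> 3"
proof -
  define S where "S = {{X, Y} | X Y. X \<noteq> Y \<and> P X Y}"
  let ?E = "{{A, B}, {A, C}, {A, D}, {B, C}, {B, D}, {C, D}} :: node set set"
  have mem: "{X, Y} \<in> S \<longleftrightarrow> X \<noteq> Y \<and> P X Y" for X Y
    unfolding S_def using sym by (auto simp: doubleton_eq_iff)
  have swap: "P B A = P A B" "P C A = P A C" "P D A = P A D"
      "P C B = P B C" "P D B = P B D" "P D C = P C D"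
    using sym by blast+
  have "S \<subseteq> ?E"
  proof
    fix e assume "e \<in> S"
    then obtain X Y where "e = {X, Y}" "X \<noteq> Y"
      unfolding S_def by blast
    then show "e \<in> ?E"
      by (cases X; cases Y) (auto simp: insert_commute)
  qed
  then have "card S = card (?E \<inter> S)"
    by (simp only: Int_absorb1)
  also have "\<dots> = (\<Sum>e\<in>?E. of_bool (e \<in> S))"
    by simp
  also have "\<dots> = of_bool (P A B) + of_bool (P A C) + of_bool (P A D)
      + of_bool (P B C) + of_bool (P B D) + of_bool (P C D)"
    by (simp add: mem doubleton_eq_iff del: sum_of_bool_eq)
  finally have "card S \<ge> 3"
    using triangle[of A B C] triangle[of A B D] triangle[of A C D] triangle[of B C D]
      square[of A B C D] square[of A B D C] square[of A C B D]
    by (cases "P A B"; cases "P A C"; cases "P A D"; cases "P B C"; cases "P B D"; cases "P C D")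
      (auto simp: swap)
  then show ?thesis
    unfolding S_def .
qed

theorem theorem2:
  fixes c :: "node \<Rightarrow> node \<Rightarrow> real" and R :: real
  assumes pos: "\<And>X Y. X \<noteq> Y \<Longrightarrow> c X Y > 0"
    and R_pos: "R > 0"
    and R_lt: "R < Istar c"
  shows "card {{X, Y} | X Y. X \<noteq> Y \<and> bicap c X Y > R} \<ge> 3"
proof (rule card_pairs_ge_3_if_complement_acyclic)
  have in_pairs_gt: "R < c X Z + c Y Z" if "X \<noteq> Y" "X \<noteq> Z" "Y \<noteq> Z" for X Y Z
    using R_lt Istar_le[OF that, of c] by linarith
  show "bicap c Y X > R" if "bicap c X Y > R" for X Y
    using that by (simp add: bicap_commute)
  show "R < bicap c X Y \<or> R < bicap c Y Z \<or> R < bicap c Z X" if "distinct [X, Y, Z]" for X Y Z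
    using no_weak_triangle[OF in_pairs_gt that] .
  show "R < bicap c X Y \<or> R < bicap c Y Z \<or> R < bicap c Z W \<or> R < bicap c W X"
    if "distinct [X, Y, Z, W]" for X Y Z W
    using no_weak_square[OF in_pairs_gt that] .
qed

end
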